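(* The Banach lattice $c_0$ is complemented in $FBL[c_0]$: there exist a Banach lattice homomorphism $u: c_0 \to FBL[c_0]$ which is an isometric embedding and a surjective Banach lattice homomorphism $T: FBL[c_0]\to c_0$ with $T\circ u = \mathrm{id}_{c_0}$.
   Context: For a Banach space $E$, for $x\in E$ let $\delta_x: E^*\to\mathbb{R}$, $\delta_x(x^* )=x^*(x)$. For $f: E^*\to\mathbb{R}$ put $$\|f\|_{FBL[E]} = \sup \Big\{\sum_{i = 1}^n |f(x_{i}^{*})| : n \in \mathbb{N},\ x_1^{*}, \ldots, x_n^{*} \in E^{*},\ \sup_{x \in B_E} \sum_{i=1}^n |x_i^{*}(x)| \leq 1 \Big\}.$$ The free Banach lattice $FBL[E]$ generated by $E$ is the closure, with respect to this norm, of the vector sublattice of $\mathbb{R}^{E^*}$ (pointwise operations and order) generated by $\{\delta_x : x\in E\}$. Here $E=c_0$ with $c_0^*=\ell_1$. In the paper the map $T$ is $T(f)=(f(e_1^* ),f(e_2^* ),\ldots)$, where $e_n^*$ are the unit vectors of $\ell_1$. *)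

theory Defs
  imports Complex_Main
begin

definition c0 :: "(nat \<Rightarrow> real) set" where
  "c0 = {x. x \<longlonglongrightarrow> 0}"

definition c0_norm :: "(nat \<Rightarrow> real) \<Rightarrow> real" where
  "c0_norm x = (SUP n. \<bar>x n\<bar>)"

text \<open>The dual c_0^* = l_1, acting by the usual pairing.\<close>
definition l1 :: "(nat \<Rightarrow> real) set" where
  "l1 = {a. summable (\<lambda>n. \<bar>a n\<bar>)}"

definition pairing :: "(nat \<Rightarrow> real) \<Rightarrow> (nat \<Rightarrow> real) \<Rightarrow> real" where
  "pairing a x = (\<Sum>n. a n * x n)"

text \<open>Functions on E^* = l_1 are represented as functions on all sequences
  that vanish outside l_1.\<close>
definition delta :: "(nat \<Rightarrow> real) \<Rightarrow> ((nat \<Rightarrow> real) \<Rightarrow> real)" where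
  "delta x = (\<lambda>a. if a \<in> l1 then pairing a x else 0)"

definition admissible :: "nat \<Rightarrow> (nat \<Rightarrow> (nat \<Rightarrow> real)) \<Rightarrow> bool" where
  "admissible n xs \<longleftrightarrow> (\<forall>i<n. xs i \<in> l1) \<and>
     (\<forall>x\<in>c0. c0_norm x \<le> 1 \<longrightarrow> (\<Sum>i<n. \<bar>pairing (xs i) x\<bar>) \<le> 1)"

definition fbl_norm_set :: "((nat \<Rightarrow> real) \<Rightarrow> real) \<Rightarrow> real set" where
  "fbl_norm_set f = {(\<Sum>i<n. \<bar>f (xs i)\<bar>) | n xs. admissible n xs}"

definition fbl_norm :: "((nat \<Rightarrow> real) \<Rightarrow> real) \<Rightarrow> real" where
  "fbl_norm f = Sup (fbl_norm_set f)"

inductive_set fvl :: "((nat \<Rightarrow> real) \<Rightarrow> real) set" where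
  gen: "x \<in> c0 \<Longrightarrow> delta x \<in> fvl"
| add: "f \<in> fvl \<Longrightarrow> g \<in> fvl \<Longrightarrow> (\<lambda>a. f a + g a) \<in> fvl"
| scale: "f \<in> fvl \<Longrightarrow> (\<lambda>a. c * f a) \<in> fvl"
| max: "f \<in> fvl \<Longrightarrow> g \<in> fvl \<Longrightarrow> (\<lambda>a. max (f a) (g a)) \<in> fvl"

definition FBL :: "((nat \<Rightarrow> real) \<Rightarrow> real) set" where
  "FBL = {f. (\<forall>a. a \<notin> l1 \<longrightarrow> f a = 0) \<and> bdd_above (fbl_norm_set f) \<and>
            (\<forall>e>0. \<exists>g\<in>fvl. fbl_norm (\<lambda>a. f a - g a) < e)}"

definition bl_hom_c0_FBL :: "((nat \<Rightarrow> real) \<Rightarrow> ((nat \<Rightarrow> real) \<Rightarrow> real)) \<Rightarrow> bool" where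
  "bl_hom_c0_FBL u \<longleftrightarrow> (\<forall>x\<in>c0. u x \<in> FBL) \<and>
     (\<forall>x\<in>c0. \<forall>y\<in>c0. u (\<lambda>n. x n + y n) = (\<lambda>a. u x a + u y a)) \<and>
     (\<forall>x\<in>c0. \<forall>c. u (\<lambda>n. c * x n) = (\<lambda>a. c * u x a)) \<and>
     (\<forall>x\<in>c0. \<forall>y\<in>c0. u (\<lambda>n. max (x n) (y n)) = (\<lambda>a. max (u x a) (u y a))) \<and>
     (\<exists>C. \<forall>x\<in>c0. fbl_norm (u x) \<le> C * c0_norm x)"

definition bl_hom_FBL_c0 :: "(((nat \<Rightarrow> real) \<Rightarrow> real) \<Rightarrow> (nat \<Rightarrow> real)) \<Rightarrow> bool" where
  "bl_hom_FBL_c0 T \<longleftrightarrow> (\<forall>f\<in>FBL. T f \<in> c0) \<and>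
     (\<forall>f\<in>FBL. \<forall>g\<in>FBL. T (\<lambda>a. f a + g a) = (\<lambda>n. T f n + T g n)) \<and>
     (\<forall>f\<in>FBL. \<forall>c. T (\<lambda>a. c * f a) = (\<lambda>n. c * T f n)) \<and>
     (\<forall>f\<in>FBL. \<forall>g\<in>FBL. T (\<lambda>a. max (f a) (g a)) = (\<lambda>n. max (T f n) (T g n))) \<and>
     (\<exists>C. \<forall>f\<in>FBL. c0_norm (T f) \<le> C * fbl_norm f)"

end

(*
  The functions f_n(a) = max 0 (2 |a_n| - 2^n * sum_m |a_m| / 2^m) on l_1 have pairwise disjoint
  supports and satisfy 0 <= f_n(a) <= |a_n| and f_n(e_n) = 1.  Truncating the series gives lattice
  expressions in the delta_(e_m) that converge to f_n in FBL-norm, so u x = sum_n x_n f_n lies in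
  FBL[c_0] and is a lattice homomorphism with |u x (a)| <= ||x|| ||a||_oo.  Testing an admissible
  family x_1^*, ..., x_n^* against suitable sign vectors shows sum_i ||x_i^*||_oo <= 1, hence
  ||u x|| <= ||x||.  Conversely |f(e_n)| <= ||f||, and f(e_n) -> 0 holds on the generated vector
  lattice and passes to its closure; so T f = (f(e_n))_n maps FBL[c_0] into c_0, and T (u x) = x
  gives ||u x|| >= ||x|| as well as surjectivity of T.
*)

theory Submission
  imports Defs
begin

definition unit_seq :: "nat \<Rightarrow> nat \<Rightarrow> real" where
  "unit_seq k = (\<lambda>m. if m = k then 1 else 0)"

lemma abs_le_c0_norm: "Bseq x \<Longrightarrow> \<bar>x n\<bar> \<le> c0_norm x"
  unfolding Bseq_def c0_norm_def by (auto intro!: cSUP_upper bdd_aboveI2)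

lemma c0_norm_nonneg: "Bseq x \<Longrightarrow> 0 \<le> c0_norm x"
  using abs_le_c0_norm[of x 0] by linarith

lemma c0_norm_le: "(\<And>n. \<bar>x n\<bar> \<le> B) \<Longrightarrow> c0_norm x \<le> B"
  unfolding c0_norm_def by (rule cSUP_least) auto

lemma c0_norm_approx:
  assumes "Bseq x" "0 < d"
  obtains m where "c0_norm x - d < \<bar>x m\<bar>"
proof -
  have "bdd_above (range (\<lambda>n. \<bar>x n\<bar>))"
    using assms(1) unfolding Bseq_def by (auto intro: bdd_aboveI2)
  then show ?thesis
    using that assms(2) less_cSUP_iff[of UNIV "\<lambda>n. \<bar>x n\<bar>" "c0_norm x - d"]
    unfolding c0_norm_def by auto
qed

lemma c0_imp_Bseq: "x \<in> c0 \<Longrightarrow> Bseq x"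
  unfolding c0_def by (auto intro: convergent_imp_Bseq convergentI)

lemma l1_subset_c0: "l1 \<subseteq> c0"
  unfolding l1_def c0_def by (auto intro: tendsto_rabs_zero_cancel summable_LIMSEQ_zero)

lemma l1_imp_Bseq: "a \<in> l1 \<Longrightarrow> Bseq a"
  using l1_subset_c0 c0_imp_Bseq by blast

lemma finite_support_in_l1:
  assumes "finite S" "\<And>k. k \<notin> S \<Longrightarrow> a k = 0"
  shows "a \<in> l1"
  using summable_finite[OF assms(1), of "\<lambda>k. \<bar>a k\<bar>"] assms(2) by (simp add: l1_def)

lemma pairing_finite_support:
  "finite S \<Longrightarrow> (\<And>k. k \<notin> S \<Longrightarrow> x k = 0) \<Longrightarrow> pairing a x = (\<Sum>k\<in>S. a k * x k)"
  unfolding pairing_def by (rule suminf_finite) auto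

lemma unit_seq_in_l1: "unit_seq k \<in> l1"
  by (rule finite_support_in_l1[of "{k}"]) (auto simp: unit_seq_def)

lemma unit_seq_in_c0: "unit_seq k \<in> c0"
  using unit_seq_in_l1 l1_subset_c0 by blast

lemma pairing_commute: "pairing a x = pairing x a"
  by (simp add: pairing_def mult.commute)

lemma pairing_unit_seq_right: "pairing a (unit_seq k) = a k"
  by (subst pairing_finite_support[of "{k}"]) (auto simp: unit_seq_def)

lemma pairing_unit_seq_left: "pairing (unit_seq k) x = x k"
  by (simp add: pairing_commute pairing_unit_seq_right)

lemma pairing_scale_right:
  assumes "a \<in> l1" "x \<in> c0"
  shows "pairing a (\<lambda>k. c * x k) = c * pairing a x"
proof -
  have "summable (\<lambda>k. \<bar>a k\<bar> * c0_norm x)"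
    using assms(1) unfolding l1_def by (auto intro: summable_mult2)
  moreover have "norm (a k * x k) \<le> \<bar>a k\<bar> * c0_norm x" for k
    using abs_le_c0_norm[OF c0_imp_Bseq[OF assms(2)]] by (simp add: abs_mult mult_left_mono)
  ultimately have "summable (\<lambda>k. a k * x k)"
    by (rule summable_comparison_test'[of _ 0])
  then show ?thesis
    unfolding pairing_def using suminf_mult[of "\<lambda>k. a k * x k" c] by (simp add: algebra_simps)
qed

lemma delta_eq_pairing: "a \<in> l1 \<Longrightarrow> delta x a = pairing a x"
  by (simp add: delta_def)

text \<open>The offset \<open>r\<close> only serves the induction; it is \<open>0\<close> in the application.\<close>
lemma exists_signs_dominating:
  fixes A :: "nat \<Rightarrow> nat \<Rightarrow> real" and \<nu> :: "nat \<Rightarrow> nat" and r :: "nat \<Rightarrow> real"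
  assumes "finite S"
  shows "\<exists>\<epsilon>. (\<forall>k. \<bar>\<epsilon> k\<bar> \<le> 1) \<and>
    (\<Sum>i<n. if \<nu> i \<in> S then \<bar>A i (\<nu> i)\<bar> else \<bar>r i\<bar>) \<le> (\<Sum>i<n. \<bar>r i + (\<Sum>k\<in>S. A i k * \<epsilon> k)\<bar>)"
  using assms
proof (induction S arbitrary: r rule: finite_induct)
  case empty
  show ?case by (intro exI[of _ "\<lambda>_. 0"]) simp
next
  case (insert k S)
  define L where "L T r = (\<Sum>i<n. if \<nu> i \<in> T then \<bar>A i (\<nu> i)\<bar> else \<bar>r i\<bar>)" for T r
  obtain s :: real where s: "\<bar>s\<bar> = 1" and Ls: "L (insert k S) r \<le> L S (\<lambda>i. r i + s * A i k)"
  proof -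
    \<comment> \<open>\<open>2 \<bar>b\<bar> \<le> \<bar>a + b\<bar> + \<bar>a - b\<bar>\<close>, so one of the two signs of \<open>A i k\<close> is at least as good\<close>
    have "2 * L (insert k S) r \<le> L S (\<lambda>i. r i + 1 * A i k) + L S (\<lambda>i. r i + (-1) * A i k)"
      unfolding L_def sum.distrib[symmetric] sum_distrib_left by (rule sum_mono) auto
    then show ?thesis using that[of 1] that[of "-1"] by force
  qed
  obtain \<epsilon> where \<epsilon>: "\<forall>k. \<bar>\<epsilon> k\<bar> \<le> 1"
    and dom: "L S (\<lambda>i. r i + s * A i k) \<le> (\<Sum>i<n. \<bar>(r i + s * A i k) + (\<Sum>k\<in>S. A i k * \<epsilon> k)\<bar>)"
    using insert.IH[of "\<lambda>i. r i + s * A i k"] unfolding L_def by blast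
  have "(\<Sum>k'\<in>insert k S. A i k' * (\<epsilon>(k := s)) k') = s * A i k + (\<Sum>k'\<in>S. A i k' * \<epsilon> k')" for i
    using insert.hyps by (auto intro!: sum.cong)
  then have "L (insert k S) r \<le> (\<Sum>i<n. \<bar>r i + (\<Sum>k'\<in>insert k S. A i k' * (\<epsilon>(k := s)) k')\<bar>)"
    using Ls dom by (simp add: add.assoc)
  moreover have "\<forall>k'. \<bar>(\<epsilon>(k := s)) k'\<bar> \<le> 1" using \<epsilon> s by simp
  ultimately show ?case unfolding L_def by blast
qed

lemma admissible_sum_abs_coord_le:
  assumes adm: "admissible n xs"
  shows "(\<Sum>i<n. \<bar>xs i (\<nu> i)\<bar>) \<le> 1"
proof -
  define S where "S = \<nu> ` {..<n}"
  have "finite S" unfolding S_def by simp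
  then obtain \<epsilon> where \<epsilon>: "\<forall>k. \<bar>\<epsilon> k\<bar> \<le> 1"
    and dom: "(\<Sum>i<n. if \<nu> i \<in> S then \<bar>xs i (\<nu> i)\<bar> else \<bar>0\<bar>) \<le> (\<Sum>i<n. \<bar>0 + (\<Sum>k\<in>S. xs i k * \<epsilon> k)\<bar>)"
    using exists_signs_dominating[where r="\<lambda>_. 0"] by blast
  define x where "x k = (if k \<in> S then \<epsilon> k else 0)" for k
  have "x \<in> c0"
    using finite_support_in_l1[OF \<open>finite S\<close>, of x] l1_subset_c0 by (auto simp: x_def)
  moreover have "c0_norm x \<le> 1"
    using \<epsilon> by (intro c0_norm_le) (simp add: x_def)
  ultimately have "(\<Sum>i<n. \<bar>pairing (xs i) x\<bar>) \<le> 1"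
    using adm unfolding admissible_def by blast
  moreover have "pairing (xs i) x = (\<Sum>k\<in>S. xs i k * \<epsilon> k)" for i
    using pairing_finite_support[OF \<open>finite S\<close>, of x "xs i"] by (simp add: x_def)
  ultimately show ?thesis
    using dom by (simp add: S_def)
qed

lemma admissible_sum_c0_norm_le:
  assumes adm: "admissible n xs"
  shows "(\<Sum>i<n. c0_norm (xs i)) \<le> 1"
proof (rule field_le_epsilon)
  fix e :: real assume "0 < e"
  define d where "d = e / (real n + 1)"
  have "0 < d" using \<open>0 < e\<close> by (simp add: d_def)
  have "\<exists>m. c0_norm (xs i) - d < \<bar>xs i m\<bar>" if "i < n" for i
    using adm that \<open>0 < d\<close> c0_norm_approx[OF l1_imp_Bseq]
    unfolding admissible_def by metis
  then obtain \<nu> where \<nu>: "\<And>i. i < n \<Longrightarrow> c0_norm (xs i) - d < \<bar>xs i (\<nu> i)\<bar>" by metis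
  have "(\<Sum>i<n. c0_norm (xs i)) \<le> (\<Sum>i<n. \<bar>xs i (\<nu> i)\<bar> + d)"
    by (rule sum_mono) (use \<nu> in fastforce)
  also have "\<dots> = (\<Sum>i<n. \<bar>xs i (\<nu> i)\<bar>) + real n * d" by (simp add: sum.distrib)
  also have "\<dots> \<le> 1 + e"
  proof -
    have "real n * d \<le> e" using \<open>0 < e\<close> by (simp add: d_def field_simps)
    then show ?thesis using admissible_sum_abs_coord_le[OF adm, of \<nu>] by linarith
  qed
  finally show "(\<Sum>i<n. c0_norm (xs i)) \<le> 1 + e" .
qed

lemma sum_abs_le_fbl_norm:
  assumes "bdd_above (fbl_norm_set h)" "admissible n xs"
  shows "(\<Sum>i<n. \<bar>h (xs i)\<bar>) \<le> fbl_norm h"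
  unfolding fbl_norm_def using assms by (intro cSup_upper) (auto simp: fbl_norm_set_def)

lemma abs_unit_le_fbl_norm:
  assumes "bdd_above (fbl_norm_set h)"
  shows "\<bar>h (unit_seq k)\<bar> \<le> fbl_norm h"
proof -
  have "\<bar>x k\<bar> \<le> 1" if "x \<in> c0" "c0_norm x \<le> 1" for x
    using abs_le_c0_norm[OF c0_imp_Bseq[OF that(1)], of k] that(2) by linarith
  then have "admissible 1 (\<lambda>_. unit_seq k)"
    by (simp add: admissible_def unit_seq_in_l1 pairing_unit_seq_left)
  then show ?thesis using sum_abs_le_fbl_norm[OF assms] by fastforce
qed

lemma fbl_norm_le_if_dominated:
  assumes dom: "\<And>a. a \<in> l1 \<Longrightarrow> \<bar>h a\<bar> \<le> C * c0_norm a" and "0 \<le> C"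
  shows "bdd_above (fbl_norm_set h)" and "fbl_norm h \<le> C"
proof -
  have le: "y \<le> C" if "y \<in> fbl_norm_set h" for y
  proof -
    from that obtain n xs where y: "y = (\<Sum>i<n. \<bar>h (xs i)\<bar>)" and adm: "admissible n xs"
      by (auto simp: fbl_norm_set_def)
    have "y \<le> (\<Sum>i<n. C * c0_norm (xs i))"
      unfolding y using adm dom by (intro sum_mono) (auto simp: admissible_def)
    also have "\<dots> \<le> C"
      using mult_left_mono[OF admissible_sum_c0_norm_le[OF adm] \<open>0 \<le> C\<close>]
      by (simp add: sum_distrib_left)
    finally show ?thesis .
  qed
  then show "bdd_above (fbl_norm_set h)" by (rule bdd_aboveI)
  have "admissible 0 xs" for xs by (simp add: admissible_def)
  then have "fbl_norm_set h \<noteq> {}" by (auto simp: fbl_norm_set_def)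
  then show "fbl_norm h \<le> C" unfolding fbl_norm_def using le by (rule cSup_least)
qed

lemma bdd_fbl_norm_set_if_dominated:
  assumes "bdd_above (fbl_norm_set f)" "bdd_above (fbl_norm_set g)"
    and dom: "\<And>a. a \<in> l1 \<Longrightarrow> \<bar>h a\<bar> \<le> c * \<bar>f a\<bar> + d * \<bar>g a\<bar>" and "0 \<le> c" "0 \<le> d"
  shows "bdd_above (fbl_norm_set h)"
proof (rule bdd_aboveI)
  fix y assume "y \<in> fbl_norm_set h"
  then obtain n xs where y: "y = (\<Sum>i<n. \<bar>h (xs i)\<bar>)" and adm: "admissible n xs"
    by (auto simp: fbl_norm_set_def)
  have "y \<le> (\<Sum>i<n. c * \<bar>f (xs i)\<bar> + d * \<bar>g (xs i)\<bar>)"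
    unfolding y using adm dom by (intro sum_mono) (auto simp: admissible_def)
  also have "\<dots> = c * (\<Sum>i<n. \<bar>f (xs i)\<bar>) + d * (\<Sum>i<n. \<bar>g (xs i)\<bar>)"
    by (simp add: sum.distrib sum_distrib_left)
  also have "\<dots> \<le> c * fbl_norm f + d * fbl_norm g"
    using mult_left_mono[OF sum_abs_le_fbl_norm[OF assms(1) adm] \<open>0 \<le> c\<close>]
      mult_left_mono[OF sum_abs_le_fbl_norm[OF assms(2) adm] \<open>0 \<le> d\<close>] by linarith
  finally show "y \<le> c * fbl_norm f + d * fbl_norm g" .
qed

lemma sum_abs_delta_le_c0_norm:
  assumes x: "x \<in> c0" and adm: "admissible n xs"
  shows "(\<Sum>i<n. \<bar>delta x (xs i)\<bar>) \<le> c0_norm x"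
proof (cases "c0_norm x = 0")
  case True
  then have "x k = 0" for k
    using abs_le_c0_norm[OF c0_imp_Bseq[OF x], of k] by linarith
  then have "delta x a = 0" for a by (simp add: delta_def pairing_def)
  then show ?thesis using True by simp
next
  case False
  define B where "B = c0_norm x"
  have "0 < B" using False c0_norm_nonneg[OF c0_imp_Bseq[OF x]] by (simp add: B_def)
  have xs: "xs i \<in> l1" if "i < n" for i using adm that by (simp add: admissible_def)
  have "(\<lambda>k. (1 / B) * x k) \<in> c0"
    using x unfolding c0_def by (auto intro: tendsto_divide_zero)
  moreover have "c0_norm (\<lambda>k. (1 / B) * x k) \<le> 1"
    using abs_le_c0_norm[OF c0_imp_Bseq[OF x]] \<open>0 < B\<close>
    by (intro c0_norm_le) (simp add: B_def abs_mult divide_le_eq_1)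
  ultimately have "(\<Sum>i<n. \<bar>pairing (xs i) (\<lambda>k. (1 / B) * x k)\<bar>) \<le> 1"
    using adm unfolding admissible_def by blast
  also have "(\<Sum>i<n. \<bar>pairing (xs i) (\<lambda>k. (1 / B) * x k)\<bar>) = (\<Sum>i<n. \<bar>delta x (xs i)\<bar>) / B"
  proof -
    have "\<bar>pairing (xs i) (\<lambda>k. (1 / B) * x k)\<bar> = \<bar>delta x (xs i)\<bar> / B" if "i < n" for i
      using pairing_scale_right[OF xs[OF that] x, of "1 / B"] delta_eq_pairing[OF xs[OF that]]
        \<open>0 < B\<close>
      by (simp add: abs_mult)
    then show ?thesis by (simp add: sum_divide_distrib)
  qed
  finally show ?thesis using \<open>0 < B\<close> by (simp add: B_def divide_le_eq)
qed

lemma fvl_zero: "(\<lambda>a. 0) \<in> fvl"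
  using fvl.scale[OF fvl.gen[OF unit_seq_in_c0], of 0 0] by simp

lemma fvl_diff: "f \<in> fvl \<Longrightarrow> g \<in> fvl \<Longrightarrow> (\<lambda>a. f a - g a) \<in> fvl"
  using fvl.add[OF _ fvl.scale, of f g "-1"] by simp

lemma fvl_divide: "f \<in> fvl \<Longrightarrow> (\<lambda>a. f a / c) \<in> fvl"
  using fvl.scale[of f "1 / c"] by simp

lemma fvl_abs:
  assumes "f \<in> fvl"
  shows "(\<lambda>a. \<bar>f a\<bar>) \<in> fvl"
proof -
  have "(\<lambda>a. max (f a) (-1 * f a)) = (\<lambda>a. \<bar>f a\<bar>)" by (rule ext) arith
  then show ?thesis using fvl.max[OF assms fvl.scale[OF assms], of "-1"] by simp
qed

lemma fvl_max0: "f \<in> fvl \<Longrightarrow> (\<lambda>a. max 0 (f a)) \<in> fvl"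
  using fvl.max[OF fvl_zero] by blast

lemma fvl_sum: "(\<And>i. i < (N::nat) \<Longrightarrow> F i \<in> fvl) \<Longrightarrow> (\<lambda>a. \<Sum>i<N. F i a) \<in> fvl"
proof (induction N)
  case 0
  then show ?case using fvl_zero by simp
next
  case (Suc N)
  then show ?case using fvl.add[of "\<lambda>a. \<Sum>i<N. F i a" "F N"] by simp
qed

lemma fvl_bdd_fbl_norm_set: "g \<in> fvl \<Longrightarrow> bdd_above (fbl_norm_set g)"
proof (induction rule: fvl.induct)
  case (gen x)
  then show ?case
    by (auto simp: fbl_norm_set_def intro!: bdd_aboveI sum_abs_delta_le_c0_norm)
next
  case (add f g)
  show ?case
    by (rule bdd_fbl_norm_set_if_dominated[where c=1 and d=1, OF add.IH]) auto
next
  case (scale f c)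
  show ?case
    by (intro bdd_fbl_norm_set_if_dominated[where c="\<bar>c\<bar>" and d=0, OF scale.IH scale.IH])
      (auto simp: abs_mult)
next
  case (max f g)
  show ?case
    by (rule bdd_fbl_norm_set_if_dominated[where c=1 and d=1, OF max.IH]) auto
qed

lemma fvl_unit_tendsto_zero: "g \<in> fvl \<Longrightarrow> (\<lambda>k. g (unit_seq k)) \<longlonglongrightarrow> 0"
proof (induction rule: fvl.induct)
  case (gen x)
  have "(\<lambda>k. delta x (unit_seq k)) = x"
    using unit_seq_in_l1 by (simp add: delta_def pairing_unit_seq_left)
  then show ?case using gen by (simp add: c0_def)
next
  case (add f g)
  show ?case by (rule tendsto_add_zero[OF add.IH])
next
  case (scale f c)
  show ?case by (rule tendsto_mult_right_zero[OF scale.IH])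
next
  case (max f g)
  show ?case using tendsto_max[OF max.IH] by simp
qed

lemma FBL_unit_tendsto_zero:
  assumes f: "f \<in> FBL"
  shows "(\<lambda>k. f (unit_seq k)) \<longlonglongrightarrow> 0"
proof (rule tendstoI)
  fix r :: real assume "0 < r"
  then have "r / 2 > 0" by simp
  then have "\<exists>g\<in>fvl. fbl_norm (\<lambda>a. f a - g a) < r / 2"
    using f unfolding FBL_def by blast
  then obtain g where g: "g \<in> fvl" and fg: "fbl_norm (\<lambda>a. f a - g a) < r / 2" by blast
  have "bdd_above (fbl_norm_set f)" using f by (simp add: FBL_def)
  then have "bdd_above (fbl_norm_set (\<lambda>a. f a - g a))"
    by (rule bdd_fbl_norm_set_if_dominated[where c=1 and d=1, OF _ fvl_bdd_fbl_norm_set[OF g]]) auto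
  then have close: "\<bar>f (unit_seq k) - g (unit_seq k)\<bar> < r / 2" for k
    using abs_unit_le_fbl_norm[of "\<lambda>a. f a - g a" k] fg by simp
  have "\<forall>\<^sub>F k in sequentially. \<bar>g (unit_seq k)\<bar> < r / 2"
    using tendstoD[OF fvl_unit_tendsto_zero[OF g], of "r / 2"] \<open>0 < r\<close> by simp
  then show "\<forall>\<^sub>F k in sequentially. dist (f (unit_seq k)) 0 < r"
  proof (rule eventually_mono)
    fix k assume "\<bar>g (unit_seq k)\<bar> < r / 2"
    then show "dist (f (unit_seq k)) 0 < r"
      using close[of k] abs_triangle_ineq[of "f (unit_seq k) - g (unit_seq k)" "g (unit_seq k)"]
      by (simp add: dist_real_def)
  qed
qed

definition dyadic_sum :: "(nat \<Rightarrow> real) \<Rightarrow> real" where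
  "dyadic_sum a = (\<Sum>m. \<bar>a m\<bar> / 2 ^ m)"

lemma summable_dyadic:
  fixes a :: "nat \<Rightarrow> real"
  assumes "Bseq a"
  shows "summable (\<lambda>m. \<bar>a m\<bar> / 2 ^ m)"
proof (rule summable_comparison_test')
  show "summable (\<lambda>m. c0_norm a * (1 / 2) ^ m :: real)"
    by (intro summable_mult summable_geometric) simp
  show "norm (\<bar>a m\<bar> / 2 ^ m) \<le> c0_norm a * (1 / 2) ^ m" for m
    using abs_le_c0_norm[OF assms, of m] by (simp add: power_divide divide_right_mono)
qed

lemma sum_dyadic_le:
  "Bseq a \<Longrightarrow> finite I \<Longrightarrow> (\<Sum>m\<in>I. \<bar>a m\<bar> / 2 ^ m) \<le> dyadic_sum a"
  unfolding dyadic_sum_def by (rule sum_le_suminf[OF summable_dyadic]) auto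

lemma dyadic_sum_minus_partial_le:
  assumes "Bseq a"
  shows "\<bar>dyadic_sum a - (\<Sum>m<K. \<bar>a m\<bar> / 2 ^ m)\<bar> \<le> 2 * c0_norm a / 2 ^ K"
proof -
  define tail where "tail = (\<lambda>m. \<bar>a (m + K)\<bar> / 2 ^ (m + K))"
  have "summable tail"
    unfolding tail_def using summable_ignore_initial_segment[OF summable_dyadic[OF assms], of K] .
  have "dyadic_sum a - (\<Sum>m<K. \<bar>a m\<bar> / 2 ^ m) = suminf tail"
    using suminf_split_initial_segment[OF summable_dyadic[OF assms], of K]
    by (simp add: dyadic_sum_def tail_def)
  moreover have "0 \<le> suminf tail"
    by (rule suminf_nonneg[OF \<open>summable tail\<close>]) (simp add: tail_def)
  moreover have "suminf tail \<le> (\<Sum>m. c0_norm a / 2 ^ K * (1 / 2) ^ m)"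
  proof (rule suminf_le[OF _ \<open>summable tail\<close>])
    show "summable (\<lambda>m. c0_norm a / 2 ^ K * (1 / 2 :: real) ^ m)"
      by (intro summable_mult summable_geometric) simp
    show "tail m \<le> c0_norm a / 2 ^ K * (1 / 2) ^ m" for m
      using abs_le_c0_norm[OF assms, of "m + K"]
      by (simp add: tail_def power_add power_divide divide_right_mono mult.commute)
  qed
  moreover have "(\<Sum>m. c0_norm a / 2 ^ K * (1 / 2 :: real) ^ m) = 2 * c0_norm a / 2 ^ K"
    using suminf_mult[OF summable_geometric, of "1 / 2 :: real" "c0_norm a / 2 ^ K"]
      suminf_geometric[of "1 / 2 :: real"]
    by simp
  ultimately show ?thesis by simp
qed

text \<open>\<open>bump n a > 0\<close> forces \<open>\<bar>a n\<bar> / 2 ^ n > dyadic_sum a / 2\<close>, which can hold for at most one \<open>n\<close>.\<close>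
definition bump :: "nat \<Rightarrow> (nat \<Rightarrow> real) \<Rightarrow> real" where
  "bump n a = (if a \<in> l1 then max 0 (2 * \<bar>a n\<bar> - 2 ^ n * dyadic_sum a) else 0)"

lemma bump_nonneg: "0 \<le> bump n a"
  by (simp add: bump_def)

lemma bump_le_abs: "bump n a \<le> \<bar>a n\<bar>"
proof (cases "a \<in> l1")
  case True
  have "\<bar>a n\<bar> / 2 ^ n \<le> dyadic_sum a"
    using sum_dyadic_le[OF l1_imp_Bseq[OF True], of "{n}"] by simp
  then show ?thesis using True by (simp add: bump_def divide_le_eq mult.commute)
qed (simp add: bump_def)

lemma bump_support_unique:
  obtains n where "\<And>m. m \<noteq> n \<Longrightarrow> bump m a = 0"
proof (cases "\<exists>n. bump n a \<noteq> 0")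
  case True
  then obtain n where n: "bump n a \<noteq> 0" by blast
  have "bump m a = 0" if "m \<noteq> n" for m
  proof (rule ccontr)
    assume "bump m a \<noteq> 0"
    with n have "a \<in> l1" and "dyadic_sum a < 2 * (\<bar>a n\<bar> / 2 ^ n)"
      and "dyadic_sum a < 2 * (\<bar>a m\<bar> / 2 ^ m)"
      by (auto simp: bump_def field_simps split: if_splits)
    moreover have "(\<Sum>k\<in>{n, m}. \<bar>a k\<bar> / 2 ^ k) \<le> dyadic_sum a"
      using \<open>a \<in> l1\<close> by (intro sum_dyadic_le l1_imp_Bseq) auto
    ultimately show False using \<open>m \<noteq> n\<close> by simp
  qed
  then show ?thesis by (rule that)
qed (use that in blast)

lemma dyadic_sum_unit_seq: "dyadic_sum (unit_seq n) = 1 / 2 ^ n"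
  unfolding dyadic_sum_def by (subst suminf_finite[of "{n}"]) (auto simp: unit_seq_def)

lemma bump_unit_seq: "bump n (unit_seq n) = 1"
  by (simp add: bump_def unit_seq_in_l1 dyadic_sum_unit_seq) (simp add: unit_seq_def)

definition lattice_embed :: "(nat \<Rightarrow> real) \<Rightarrow> (nat \<Rightarrow> real) \<Rightarrow> real" where
  "lattice_embed x a = (\<Sum>n. x n * bump n a)"

lemma lattice_embed_eq_single:
  "(\<And>m. m \<noteq> n \<Longrightarrow> bump m a = 0) \<Longrightarrow> lattice_embed x a = x n * bump n a"
  unfolding lattice_embed_def by (subst suminf_finite[of "{n}"]) auto

lemma partial_lattice_embed_eq_single:
  assumes "\<And>m. m \<noteq> n \<Longrightarrow> bump m a = 0"
  shows "(\<Sum>m<N. x m * bump m a) = (if n < N then x n * bump n a else 0)"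
proof -
  have "(\<Sum>m<N. x m * bump m a) = (\<Sum>m<N. if m = n then x n * bump n a else 0)"
    using assms by (intro sum.cong) auto
  then show ?thesis by simp
qed

lemma lattice_embed_outside_l1: "a \<notin> l1 \<Longrightarrow> lattice_embed x a = 0"
  by (simp add: lattice_embed_def bump_def)

lemma lattice_embed_unit_seq: "lattice_embed x (unit_seq n) = x n"
proof -
  have "bump m (unit_seq n) = 0" if "m \<noteq> n" for m
    using bump_le_abs[of m "unit_seq n"] bump_nonneg[of m "unit_seq n"] that
    by (simp add: unit_seq_def)
  then show ?thesis by (simp add: lattice_embed_eq_single[of n] bump_unit_seq)
qed

lemma lattice_embed_add:
  "lattice_embed (\<lambda>n. x n + y n) = (\<lambda>a. lattice_embed x a + lattice_embed y a)"
proof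
  fix a
  obtain n where n: "\<And>m. m \<noteq> n \<Longrightarrow> bump m a = 0" using bump_support_unique by blast
  show "lattice_embed (\<lambda>n. x n + y n) a = lattice_embed x a + lattice_embed y a"
    by (simp add: lattice_embed_eq_single[OF n] distrib_right)
qed

lemma lattice_embed_scale: "lattice_embed (\<lambda>n. c * x n) = (\<lambda>a. c * lattice_embed x a)"
proof
  fix a
  obtain n where n: "\<And>m. m \<noteq> n \<Longrightarrow> bump m a = 0" using bump_support_unique by blast
  show "lattice_embed (\<lambda>n. c * x n) a = c * lattice_embed x a"
    by (simp add: lattice_embed_eq_single[OF n])
qed

lemma lattice_embed_max:
  "lattice_embed (\<lambda>n. max (x n) (y n)) = (\<lambda>a. max (lattice_embed x a) (lattice_embed y a))"
proof
  fix a
  obtain n where n: "\<And>m. m \<noteq> n \<Longrightarrow> bump m a = 0" using bump_support_unique by blast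
  show "lattice_embed (\<lambda>n. max (x n) (y n)) a = max (lattice_embed x a) (lattice_embed y a)"
    by (simp add: lattice_embed_eq_single[OF n] max_mult_distrib_right bump_nonneg)
qed

lemma lattice_embed_minus_partial_le:
  assumes "a \<in> l1" and tail: "\<And>n. N \<le> n \<Longrightarrow> \<bar>x n\<bar> \<le> E"
  shows "\<bar>lattice_embed x a - (\<Sum>n<N. x n * bump n a)\<bar> \<le> E * c0_norm a"
proof -
  obtain n where n: "\<And>m. m \<noteq> n \<Longrightarrow> bump m a = 0" using bump_support_unique by blast
  have "0 \<le> E" using tail[of N] by simp
  have "0 \<le> c0_norm a" by (rule c0_norm_nonneg[OF l1_imp_Bseq[OF \<open>a \<in> l1\<close>]])
  show ?thesis
  proof (cases "n < N")
    case True
    then show ?thesis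
      using \<open>0 \<le> E\<close> \<open>0 \<le> c0_norm a\<close>
      by (simp add: lattice_embed_eq_single[OF n] partial_lattice_embed_eq_single[OF n])
  next
    case False
    have "\<bar>x n\<bar> * bump n a \<le> E * c0_norm a"
      using tail[of n] False bump_nonneg[of n a] \<open>0 \<le> E\<close>
        order_trans[OF bump_le_abs abs_le_c0_norm[OF l1_imp_Bseq[OF \<open>a \<in> l1\<close>]]]
      by (intro mult_mono) auto
    then show ?thesis
      using False bump_nonneg[of n a]
      by (simp add: lattice_embed_eq_single[OF n] partial_lattice_embed_eq_single[OF n] abs_mult)
  qed
qed

lemma abs_lattice_embed_le: "Bseq x \<Longrightarrow> a \<in> l1 \<Longrightarrow> \<bar>lattice_embed x a\<bar> \<le> c0_norm x * c0_norm a"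
  using lattice_embed_minus_partial_le[of a 0 x "c0_norm x"] abs_le_c0_norm[of x] by simp

text \<open>On \<open>l1\<close> we have \<open>delta (unit_seq m) a = a m\<close>, so \<open>trunc_bump K n\<close> is \<open>bump n\<close> with
  \<open>dyadic_sum\<close> cut off after \<open>K\<close> terms, written as a lattice expression in the generators.\<close>
definition trunc_bump :: "nat \<Rightarrow> nat \<Rightarrow> (nat \<Rightarrow> real) \<Rightarrow> real" where
  "trunc_bump K n a =
     max 0 (2 * \<bar>delta (unit_seq n) a\<bar> - 2 ^ n * (\<Sum>m<K. \<bar>delta (unit_seq m) a\<bar> / 2 ^ m))"

lemma trunc_bump_in_fvl: "trunc_bump K n \<in> fvl"
  unfolding trunc_bump_def[abs_def]
  by (intro fvl_max0 fvl_diff fvl.scale fvl_abs fvl_sum fvl_divide fvl.gen unit_seq_in_c0)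

lemma abs_bump_minus_trunc_bump_le:
  assumes "a \<in> l1"
  shows "\<bar>bump n a - trunc_bump K n a\<bar> \<le> 2 ^ n * (2 * c0_norm a / 2 ^ K)"
proof -
  have delta: "delta (unit_seq m) a = a m" for m
    using assms by (simp add: delta_eq_pairing pairing_unit_seq_right)
  have lipschitz: "\<bar>max 0 u - max 0 v\<bar> \<le> \<bar>u - v\<bar>" for u v :: real
    by arith
  have "\<bar>bump n a - trunc_bump K n a\<bar>
      \<le> \<bar>(2 * \<bar>a n\<bar> - 2 ^ n * dyadic_sum a) - (2 * \<bar>a n\<bar> - 2 ^ n * (\<Sum>m<K. \<bar>a m\<bar> / 2 ^ m))\<bar>"
    using assms lipschitz by (simp add: bump_def trunc_bump_def delta)
  also have "\<dots> = 2 ^ n * \<bar>dyadic_sum a - (\<Sum>m<K. \<bar>a m\<bar> / 2 ^ m)\<bar>"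
    by (simp add: abs_mult right_diff_distrib[symmetric] abs_minus_commute)
  also have "\<dots> \<le> 2 ^ n * (2 * c0_norm a / 2 ^ K)"
    using dyadic_sum_minus_partial_le[OF l1_imp_Bseq[OF assms]] by (intro mult_left_mono) auto
  finally show ?thesis .
qed

definition embed_approx :: "(nat \<Rightarrow> real) \<Rightarrow> nat \<Rightarrow> nat \<Rightarrow> (nat \<Rightarrow> real) \<Rightarrow> real" where
  "embed_approx x N K a = (\<Sum>n<N. x n * trunc_bump K n a)"

lemma embed_approx_in_fvl: "embed_approx x N K \<in> fvl"
  unfolding embed_approx_def[abs_def] by (intro fvl_sum fvl.scale trunc_bump_in_fvl)

lemma abs_lattice_embed_minus_approx_le:
  assumes "a \<in> l1" "Bseq x" and tail: "\<And>n. N \<le> n \<Longrightarrow> \<bar>x n\<bar> \<le> E"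
  shows "\<bar>lattice_embed x a - embed_approx x N K a\<bar>
    \<le> (E + real N * c0_norm x * 2 ^ Suc N / 2 ^ K) * c0_norm a"
proof -
  have "\<bar>\<Sum>n<N. x n * (bump n a - trunc_bump K n a)\<bar>
      \<le> (\<Sum>n<N. c0_norm x * (2 ^ N * (2 * c0_norm a / 2 ^ K)))"
  proof (rule order_trans[OF sum_abs sum_mono])
    fix n assume "n \<in> {..<N}"
    have "(2::real) ^ n \<le> 2 ^ N" using \<open>n \<in> {..<N}\<close> by (intro power_increasing) auto
    then have "2 ^ n * (2 * c0_norm a / 2 ^ K) \<le> 2 ^ N * (2 * c0_norm a / 2 ^ K)"
      using c0_norm_nonneg[OF l1_imp_Bseq[OF assms(1)]] by (intro mult_right_mono) auto
    then have "\<bar>bump n a - trunc_bump K n a\<bar> \<le> 2 ^ N * (2 * c0_norm a / 2 ^ K)"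
      using abs_bump_minus_trunc_bump_le[OF assms(1), of n K] by linarith
    then show "\<bar>x n * (bump n a - trunc_bump K n a)\<bar>
        \<le> c0_norm x * (2 ^ N * (2 * c0_norm a / 2 ^ K))"
      unfolding abs_mult using abs_le_c0_norm[OF assms(2)] c0_norm_nonneg[OF assms(2)]
      by (intro mult_mono) auto
  qed
  also have "\<dots> = real N * c0_norm x * 2 ^ Suc N / 2 ^ K * c0_norm a"
    by simp
  finally have "\<bar>\<Sum>n<N. x n * (bump n a - trunc_bump K n a)\<bar> \<le> \<dots>" .
  moreover have "lattice_embed x a - embed_approx x N K a
      = (lattice_embed x a - (\<Sum>n<N. x n * bump n a))
        + (\<Sum>n<N. x n * (bump n a - trunc_bump K n a))"
    by (simp add: embed_approx_def algebra_simps sum_subtractf)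
  moreover have "\<bar>lattice_embed x a - (\<Sum>n<N. x n * bump n a)\<bar> \<le> E * c0_norm a"
    by (rule lattice_embed_minus_partial_le[OF assms(1) tail])
  ultimately show ?thesis
    using abs_triangle_ineq[of "lattice_embed x a - (\<Sum>n<N. x n * bump n a)"
        "\<Sum>n<N. x n * (bump n a - trunc_bump K n a)"]
    unfolding distrib_right by linarith
qed

lemma lattice_embed_in_FBL:
  assumes x: "x \<in> c0"
  shows "lattice_embed x \<in> FBL"
proof -
  have "bdd_above (fbl_norm_set (lattice_embed x))"
    using abs_lattice_embed_le[OF c0_imp_Bseq[OF x]] c0_norm_nonneg[OF c0_imp_Bseq[OF x]]
    by (rule fbl_norm_le_if_dominated(1))
  moreover have "\<exists>g\<in>fvl. fbl_norm (\<lambda>a. lattice_embed x a - g a) < e" if "0 < e" for e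
  proof -
    have "\<forall>\<^sub>F n in sequentially. \<bar>x n\<bar> < e / 4"
      using tendstoD[of x 0 sequentially "e / 4"] x \<open>0 < e\<close> by (simp add: c0_def)
    then obtain N where N: "\<And>n. N \<le> n \<Longrightarrow> \<bar>x n\<bar> \<le> e / 4"
      unfolding eventually_sequentially by (meson less_imp_le)
    define D where "D = real N * c0_norm x * 2 ^ Suc N"
    have "0 \<le> D" using c0_norm_nonneg[OF c0_imp_Bseq[OF x]] by (simp add: D_def)
    obtain K where "4 * D / e < 2 ^ K" using real_arch_pow[of 2] by auto
    then have "D / 2 ^ K < e / 4" using \<open>0 < e\<close> by (simp add: field_simps)
    moreover have "fbl_norm (\<lambda>a. lattice_embed x a - embed_approx x N K a) \<le> e / 4 + D / 2 ^ K"
      using abs_lattice_embed_minus_approx_le[OF _ c0_imp_Bseq[OF x] N] \<open>0 \<le> D\<close> \<open>0 < e\<close>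
      by (intro fbl_norm_le_if_dominated(2)) (simp_all add: D_def)
    ultimately have "fbl_norm (\<lambda>a. lattice_embed x a - embed_approx x N K a) < e"
      using \<open>0 < e\<close> by linarith
    then show ?thesis using embed_approx_in_fvl by blast
  qed
  ultimately show ?thesis unfolding FBL_def by (simp add: lattice_embed_outside_l1)
qed

definition coords :: "((nat \<Rightarrow> real) \<Rightarrow> real) \<Rightarrow> nat \<Rightarrow> real" where
  "coords f n = f (unit_seq n)"

lemma coords_lattice_embed: "coords (lattice_embed x) = x"
  by (simp add: fun_eq_iff coords_def lattice_embed_unit_seq)

lemma coords_in_c0: "f \<in> FBL \<Longrightarrow> coords f \<in> c0"
  unfolding c0_def coords_def[abs_def] using FBL_unit_tendsto_zero by simp

lemma c0_norm_coords_le: "f \<in> FBL \<Longrightarrow> c0_norm (coords f) \<le> fbl_norm f"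
  by (rule c0_norm_le) (simp add: coords_def FBL_def abs_unit_le_fbl_norm)

lemma fbl_norm_lattice_embed:
  assumes x: "x \<in> c0"
  shows "fbl_norm (lattice_embed x) = c0_norm x"
proof (rule antisym)
  show "fbl_norm (lattice_embed x) \<le> c0_norm x"
    using abs_lattice_embed_le[OF c0_imp_Bseq[OF x]] c0_norm_nonneg[OF c0_imp_Bseq[OF x]]
    by (rule fbl_norm_le_if_dominated(2))
  show "c0_norm x \<le> fbl_norm (lattice_embed x)"
    using c0_norm_coords_le[OF lattice_embed_in_FBL[OF x]] by (simp add: coords_lattice_embed)
qed

lemma bl_hom_lattice_embed: "bl_hom_c0_FBL lattice_embed"
  unfolding bl_hom_c0_FBL_def
  using lattice_embed_in_FBL fbl_norm_lattice_embed
  by (auto simp: lattice_embed_add lattice_embed_scale lattice_embed_max intro!: exI[of _ 1])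

lemma bl_hom_coords: "bl_hom_FBL_c0 coords"
  unfolding bl_hom_FBL_c0_def
  using coords_in_c0 c0_norm_coords_le by (auto simp: coords_def fun_eq_iff intro!: exI[of _ 1])

lemma coords_image_FBL: "coords ` FBL = c0"
proof
  show "coords ` FBL \<subseteq> c0" using coords_in_c0 by blast
  show "c0 \<subseteq> coords ` FBL"
    using lattice_embed_in_FBL coords_lattice_embed by (metis image_eqI subsetI)
qed

theorem mainTheorem2:
  shows "\<exists>u T. bl_hom_c0_FBL u \<and> (\<forall>x\<in>c0. fbl_norm (u x) = c0_norm x) \<and>
           bl_hom_FBL_c0 T \<and> T ` FBL = c0 \<and> (\<forall>x\<in>c0. T (u x) = x)"
proof (intro exI conjI ballI)
  show "bl_hom_c0_FBL lattice_embed" by (rule bl_hom_lattice_embed)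
  show "bl_hom_FBL_c0 coords" by (rule bl_hom_coords)
  show "coords ` FBL = c0" by (rule coords_image_FBL)
  fix x assume "x \<in> c0"
  then show "fbl_norm (lattice_embed x) = c0_norm x" by (rule fbl_norm_lattice_embed)
  show "coords (lattice_embed x) = x" by (rule coords_lattice_embed)
qed

end
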